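(* Let $s:N_S\to\ell_2$ be any bijection with $s(n)=ne_1$ for all $n\in\mathbf{N}$, and let $x\oplus_s y=s^{-1}(s(x)+s(y))$. Then it is not the case that $\underbrace{m\oplus_s\cdots\oplus_s m}_{n}=nm$ for all $n\in\mathbf{N}$ and all $m\in N_S$.
   Context: $\mathbf{N}=\{1,2,3,\dots\}$. $\ell_2$ is the Hilbert space of square-summable real sequences and $e_1=(1,0,0,\dots)$. The set $N_S$ of supernatural (Steinitz) numbers consists of formal products $n=\prod_{p} p^{e_p(n)}$ over all primes $p$, with exponents $e_p(n)\in\{0,1,2,\dots\}\cup\{\infty\}$ (possibly infinitely many nonzero); $\mathbf{N}$ is identified with the elements having all exponents finite and only finitely many nonzero. Multiplication is defined by adding exponents, with $\infty+e=\infty$ (so e.g. $2\cdot 2^\infty=2^\infty$ and $3\cdot 2^\infty\ne 2^\infty$). *)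

theory Defs
  imports "HOL-Computational_Algebra.Primes" "HOL-Library.Extended_Nat" Complex_Main
begin

text \<open>Supernatural (Steinitz) numbers: exponent functions on primes with values in
  nat extended by infinity; the value at non-primes is fixed to 0.\<close>
typedef supernat = "{f :: nat \<Rightarrow> enat. \<forall>p. \<not> prime p \<longrightarrow> f p = 0}"
  by (rule exI[of _ "\<lambda>_. 0"]) simp

definition sn_mult :: "supernat \<Rightarrow> supernat \<Rightarrow> supernat" where
  "sn_mult a b = Abs_supernat (\<lambda>p. Rep_supernat a p + Rep_supernat b p)"

definition sn_of_nat :: "nat \<Rightarrow> supernat" where
  "sn_of_nat n = Abs_supernat (\<lambda>p. if prime p then enat (multiplicity p n) else 0)"

definition ell2 :: "(nat \<Rightarrow> real) set" where
  "ell2 = {x. summable (\<lambda>i. (x i)\<^sup>2)}"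

definition e1 :: "nat \<Rightarrow> real" where
  "e1 = (\<lambda>i. if i = 0 then 1 else 0)"

definition oplus_s :: "(supernat \<Rightarrow> nat \<Rightarrow> real) \<Rightarrow> supernat \<Rightarrow> supernat \<Rightarrow> supernat" where
  "oplus_s s x y = inv_into UNIV s (\<lambda>i. s x i + s y i)"

text \<open>n-fold sum m \<oplus>_s ... \<oplus>_s m (n \<ge> 1 copies), bracketed to the left.\<close>
fun oplus_rep :: "(supernat \<Rightarrow> nat \<Rightarrow> real) \<Rightarrow> nat \<Rightarrow> supernat \<Rightarrow> supernat" where
  "oplus_rep s (Suc 0) m = m"
| "oplus_rep s (Suc (Suc k)) m = oplus_s s (oplus_rep s (Suc k) m) m"

end

theory Submission
  imports Defs
begin

(* Every supernatural number m with m +_s m = m is sent by s to 0, because s m + s m = s m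
   in l2. But 2^\<infinity> and 2^\<infinity> 3^\<infinity> are distinct and both absorb the factor 2, so if
   m +_s m = 2 m held for all m, both would be sent to 0, contradicting injectivity of s. *)

lemma square_sum_le: "((a::real) + b)\<^sup>2 \<le> 2 * a\<^sup>2 + 2 * b\<^sup>2"
  using sum_squares_ge_zero[of "a - b" 0] by (simp add: power2_eq_square algebra_simps)

lemma ell2_add:
  assumes "x \<in> ell2" and "y \<in> ell2"
  shows "(\<lambda>i. x i + y i) \<in> ell2"
proof -
  have "summable (\<lambda>i. 2 * (x i)\<^sup>2 + 2 * (y i)\<^sup>2)"
    using assms by (intro summable_add summable_mult) (auto simp: ell2_def)
  then have "summable (\<lambda>i. (x i + y i)\<^sup>2)"
    by (rule summable_comparison_test'[where N = 0]) (simp add: square_sum_le)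
  then show ?thesis unfolding ell2_def by simp
qed

lemma oplus_s_transport:
  assumes "bij_betw s UNIV ell2"
  shows "s (oplus_s s x y) = (\<lambda>i. s x i + s y i)"
proof -
  have "(\<lambda>i. s x i + s y i) \<in> range s"
    using assms ell2_add[of "s x" "s y"] by (auto simp: bij_betw_def)
  then show ?thesis by (simp add: oplus_s_def f_inv_into_f)
qed

lemma oplus_s_idem_imp_zero:
  assumes "bij_betw s UNIV ell2" and "oplus_s s m m = m"
  shows "s m = (\<lambda>_. 0)"
proof -
  have "(\<lambda>i. s m i + s m i) = s m"
    using oplus_s_transport[OF assms(1), of m m] assms(2) by simp
  then show ?thesis by (metis add_cancel_left_left)
qed

lemma oplus_rep_two: "oplus_rep s 2 m = oplus_s s m m"
  by (simp add: numeral_2_eq_2)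

definition sn_infty :: "nat set \<Rightarrow> supernat" where
  "sn_infty P = Abs_supernat (\<lambda>p. if prime p \<and> p \<in> P then \<infinity> else 0)"

lemma Rep_sn_infty: "Rep_supernat (sn_infty P) = (\<lambda>p. if prime p \<and> p \<in> P then \<infinity> else 0)"
  unfolding sn_infty_def by (rule Abs_supernat_inverse) simp

lemma Rep_sn_of_nat: "Rep_supernat (sn_of_nat n) = (\<lambda>p. if prime p then enat (multiplicity p n) else 0)"
  unfolding sn_of_nat_def by (rule Abs_supernat_inverse) simp

lemma sn_mult_sn_infty_absorb:
  assumes "prime_factors n \<subseteq> P"
  shows "sn_mult (sn_of_nat n) (sn_infty P) = sn_infty P"
proof -
  have "multiplicity p n = 0" if "prime p" "p \<notin> P" for p
  proof -
    have "\<not> p dvd n \<or> n = 0"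
      using assms that by (auto simp: in_prime_factors_iff)
    then show ?thesis by (auto simp: not_dvd_imp_multiplicity_0)
  qed
  then have "(\<lambda>p. Rep_supernat (sn_of_nat n) p + Rep_supernat (sn_infty P) p)
             = Rep_supernat (sn_infty P)"
    by (intro ext) (simp add: Rep_sn_of_nat Rep_sn_infty enat_0)
  then show ?thesis
    unfolding sn_mult_def by (simp only: Rep_supernat_inverse)
qed

lemma sn_infty_neq:
  assumes "prime q" "q \<in> P" "q \<notin> Q"
  shows "sn_infty P \<noteq> sn_infty Q"
proof
  assume "sn_infty P = sn_infty Q"
  then have "Rep_supernat (sn_infty P) q = Rep_supernat (sn_infty Q) q" by simp
  with assms show False by (simp add: Rep_sn_infty)
qed

theorem mainTheorem14:
  fixes s :: "supernat \<Rightarrow> nat \<Rightarrow> real"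
  assumes "bij_betw s UNIV ell2"
    and "\<forall>n::nat. n \<ge> 1 \<longrightarrow> s (sn_of_nat n) = (\<lambda>i. real n * e1 i)"
  shows "\<not> (\<forall>n::nat. n \<ge> 1 \<longrightarrow> (\<forall>m. oplus_rep s n m = sn_mult (sn_of_nat n) m))"
proof
  assume "\<forall>n::nat. n \<ge> 1 \<longrightarrow> (\<forall>m. oplus_rep s n m = sn_mult (sn_of_nat n) m)"
  then have doubling: "oplus_s s m m = sn_mult (sn_of_nat 2) m" for m
    by (metis oplus_rep_two one_le_numeral)
  have zero: "s (sn_infty P) = (\<lambda>_. 0)" if "2 \<in> P" for P
  proof (rule oplus_s_idem_imp_zero[OF assms(1)])
    have "prime_factors (2::nat) \<subseteq> P"
      using that by (simp add: prime_prime_factors)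
    then show "oplus_s s (sn_infty P) (sn_infty P) = sn_infty P"
      by (simp add: doubling sn_mult_sn_infty_absorb)
  qed
  have "inj s" using assms(1) by (simp add: bij_betw_def)
  then have "sn_infty {2} = sn_infty {2, 3}"
    using zero[of "{2}"] zero[of "{2, 3}"] by (simp add: injD)
  moreover have "sn_infty {2, 3} \<noteq> sn_infty {2}"
    by (rule sn_infty_neq[of 3]) auto
  ultimately show False by simp
qed

end
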